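(* For $n\in\mathbb{N}$ and $0<x<1$, let $A(n,x)=(-1)^{n+1}\sum_{m=1}^{\infty}\cos(2\pi m x)\sum_{r=0}^{n-1}\frac{(n+r)!}{(n-r-1)!}\frac{1}{(2\pi m)^{2r+2}}$. Then \[ A(n,x)=(-1)^{n}\pi\sum_{m=1}^{\infty}Y_{2n}(4\pi m)\cos(2\pi m x)+(-1)^{n+1}\sum_{m=1}^{\infty}\Big\{2(\gamma+\log(2\pi m))J_{2n}(4\pi m)+P_{2n}(4\pi m)-2Q_{2n}(4\pi m)\Big\}\cos(2\pi m x), \] both series on the right converging.
   Context: $\gamma$ is Euler's constant, $\psi=\Gamma'/\Gamma$, $J_k$ and $Y_k$ are the Bessel functions of the first and second kind of integer order $k$. For $k\in\mathbb{N}$ and $z>0$, $P_{k}(z)=-\sum_{\lceil k/2\rceil\le r\le k-1}\frac{(k-r-1)!}{r!}\left(\frac z2\right)^{2r-k}+\sum_{\ell=0}^{\infty}(-1)^{\ell}\left(\frac z2\right)^{k+2\ell}\frac{\psi(k+\ell+1)-\psi(\ell+1)}{\ell!\,(k+\ell)!}$ and $Q_{k}(z)=\sum_{\ell=0}^{\infty}(-1)^{\ell}\left(\frac z2\right)^{k+2\ell}\frac{\psi(k+\ell+1)+\gamma}{\ell!\,(k+\ell)!}$. *)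

theory Defs
  imports "HOL-Analysis.Analysis"
begin

definition besselJ :: "nat \<Rightarrow> real \<Rightarrow> real" where
  "besselJ k z = (\<Sum>l. (-1)^l * (z/2)^(k + 2*l) / (fact l * fact (k + l)))"

text \<open>Bessel function of the second kind of integer order k (standard series, DLMF 10.8.1).\<close>
definition besselY :: "nat \<Rightarrow> real \<Rightarrow> real" where
  "besselY k z =
     (2 / pi) * ln (z/2) * besselJ k z
     - (1 / pi) * (\<Sum>r<k. fact (k - r - 1) / fact r * (z/2) powi (2 * int r - int k))
     - (1 / pi) * (\<Sum>l. (-1)^l * (z/2)^(k + 2*l) *
          (Digamma (real l + 1) + Digamma (real (k + l) + 1)) / (fact l * fact (k + l)))"

definition P_fun :: "nat \<Rightarrow> real \<Rightarrow> real" where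
  "P_fun k z =
     - (\<Sum>r\<in>{(k + 1) div 2 ..< k}. fact (k - r - 1) / fact r * (z/2)^(2*r - k))
     + (\<Sum>l. (-1)^l * (z/2)^(k + 2*l) *
          (Digamma (real (k + l) + 1) - Digamma (real l + 1)) / (fact l * fact (k + l)))"

definition Q_fun :: "nat \<Rightarrow> real \<Rightarrow> real" where
  "Q_fun k z =
     (\<Sum>l. (-1)^l * (z/2)^(k + 2*l) *
          (Digamma (real (k + l) + 1) + euler_mascheroni) / (fact l * fact (k + l)))"

definition A_fun :: "nat \<Rightarrow> real \<Rightarrow> real" where
  "A_fun n x = (-1)^(n+1) * (\<Sum>m. cos (2*pi*real (Suc m)*x) *
      (\<Sum>r<n. fact (n + r) / fact (n - r - 1) * (1 / (2*pi*real (Suc m))^(2*r+2))))"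

end

theory Submission
  imports Defs
begin

text \<open>
  Termwise, \<open>2(\<gamma> + log X) J\<^sub>2\<^sub>n(2X) + P\<^sub>2\<^sub>n(2X) - 2 Q\<^sub>2\<^sub>n(2X)\<close> equals
  \<open>\<pi> Y\<^sub>2\<^sub>n(2X) + \<Sum>\<^sub>r\<^sub><\<^sub>n (n+r)!/(n-r-1)! X\<^sup>-\<^sup>2\<^sup>r\<^sup>-\<^sup>2\<close>: the digamma series of
  \<open>P\<close>, \<open>Q\<close> and \<open>Y\<close> cancel against \<open>\<gamma> J\<close>, and the finite part of \<open>P\<close> removes the nonnegative
  powers of \<open>X\<close> from the finite part of \<open>\<pi> Y\<close>; for \<open>X = 2\<pi>m\<close> the negative powers that remain
  are the summands of \<open>A(n, x)\<close>. As these are \<open>O(m\<^sup>-\<^sup>2)\<close>, everything reduces to the convergence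
  of \<open>\<Sum> Y\<^sub>2\<^sub>n(4\<pi>m) cos(2\<pi>mx)\<close>. The partial sums of \<open>cos(2\<pi>mx)\<close> are bounded, so by
  Dirichlet's test it suffices that \<open>Y\<^sub>2\<^sub>n(4\<pi>m)\<close> tends to 0 with bounded variation. This
  follows from Bessel's equation: \<open>u = \<surd>t Y\<close> solves \<open>u'' = (\<nu>/t\<^sup>2 - 1) u\<close> with \<open>\<nu> > 0\<close>, so \<open>u\<close>
  and \<open>u'\<close> are bounded, and at multiples of \<open>2\<pi>\<close> the function \<open>Y\<close> agrees with
  \<open>(u cos t - u' sin t)/\<surd>t\<close>, whose derivative is \<open>O(t\<^sup>-\<^sup>3\<^sup>/\<^sup>2)\<close>.
\<close>

section \<open>Summation by parts\<close>

lemma summable_Dirichlet: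
  fixes a b :: "nat \<Rightarrow> real"
  assumes a0: "a \<longlonglongrightarrow> 0" and bv: "summable (\<lambda>m. \<bar>a (Suc m) - a m\<bar>)"
    and bounded: "\<And>N. \<bar>\<Sum>m<N. b m\<bar> \<le> K"
  shows "summable (\<lambda>m. a m * b m)"
proof -
  define B where "B N = (\<Sum>m<N. b m)" for N
  have abel: "(\<Sum>m<N. a m * b m) = a N * B N - (\<Sum>m<N. (a (Suc m) - a m) * B (Suc m))" for N
    by (induction N) (simp_all add: B_def algebra_simps)
  have "summable (\<lambda>m. (a (Suc m) - a m) * B (Suc m))"
  proof (rule summable_comparison_test'[OF summable_mult[OF bv, of K]])
    show "norm ((a (Suc m) - a m) * B (Suc m)) \<le> K * \<bar>a (Suc m) - a m\<bar>" for m
      using mult_left_mono[OF bounded[of "Suc m"] abs_ge_zero[of "a (Suc m) - a m"]]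
      by (simp add: abs_mult B_def mult.commute)
  qed
  moreover have "(\<lambda>N. a N * B N) \<longlonglongrightarrow> 0"
  proof (rule Lim_null_comparison)
    show "\<forall>\<^sub>F N in sequentially. norm (a N * B N) \<le> K * \<bar>a N\<bar>"
      using mult_left_mono[OF bounded abs_ge_zero] by (auto simp: abs_mult B_def mult.commute)
    show "(\<lambda>N. K * \<bar>a N\<bar>) \<longlonglongrightarrow> 0"
      using tendsto_mult_right_zero[OF tendsto_rabs_zero[OF a0]] .
  qed
  ultimately have "(\<lambda>m. a m * b m) sums (0 - (\<Sum>m. (a (Suc m) - a m) * B (Suc m)))"
    unfolding sums_def abel by (intro tendsto_diff summable_LIMSEQ)
  then show ?thesis by (rule sums_summable)
qed

lemma abs_sum_cos_le:
  fixes t :: real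
  assumes "sin (t/2) \<noteq> 0"
  shows "\<bar>\<Sum>m<N. cos (real (Suc m) * t)\<bar> \<le> 1 / \<bar>sin (t/2)\<bar>"
proof -
  define f where "f m = sin ((real m + 1/2) * t)" for m
  have "2 * sin (t/2) * cos (real (Suc m) * t) = f (Suc m) - f m" for m
    using sin_add[of "real (Suc m) * t" "t/2"] sin_diff[of "real (Suc m) * t" "t/2"]
    by (simp add: f_def algebra_simps)
  then have "2 * sin (t/2) * (\<Sum>m<N. cos (real (Suc m) * t)) = f N - f 0"
    by (simp add: sum_distrib_left sum_lessThan_telescope)
  moreover have "\<bar>f N - f 0\<bar> \<le> 2"
    using abs_triangle_ineq4[of "f N" "f 0"] abs_sin_le_one[of "(real N + 1/2) * t"]
      abs_sin_le_one[of "(real 0 + 1/2) * t"] unfolding f_def by linarith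
  ultimately have "2 * \<bar>sin (t/2)\<bar> * \<bar>\<Sum>m<N. cos (real (Suc m) * t)\<bar> \<le> 2"
    by (metis abs_mult abs_numeral)
  then show ?thesis using assms by (simp add: field_simps)
qed

section \<open>Decay of solutions of Bessel's equation\<close>

lemma abs_diff_le_of_deriv_le:
  fixes f g g' :: "real \<Rightarrow> real"
  assumes "a \<le> b"
    and f: "\<And>y. a \<le> y \<Longrightarrow> y \<le> b \<Longrightarrow> \<exists>d. (f has_real_derivative d) (at y) \<and> \<bar>d\<bar> \<le> g' y"
    and g: "\<And>y. a \<le> y \<Longrightarrow> y \<le> b \<Longrightarrow> (g has_real_derivative g' y) (at y)"
  shows "\<bar>f b - f a\<bar> \<le> g b - g a"
proof -
  have "f b - g b \<le> f a - g a"
  proof (rule DERIV_nonpos_imp_nonincreasing[OF assms(1)])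
    fix y assume "a \<le> y" "y \<le> b"
    with f g show "\<exists>d. ((\<lambda>y. f y - g y) has_real_derivative d) (at y) \<and> d \<le> 0"
      by (fastforce intro: DERIV_diff)
  qed
  moreover have "f a + g a \<le> f b + g b"
  proof (rule DERIV_nonneg_imp_nondecreasing[OF assms(1)])
    fix y assume "a \<le> y" "y \<le> b"
    with f g show "\<exists>d. ((\<lambda>y. f y + g y) has_real_derivative d) (at y) \<and> d \<ge> 0"
      by (fastforce intro: DERIV_add)
  qed
  ultimately show ?thesis by linarith
qed

text \<open>For \<open>K = k\<^sup>2\<close> the system \<open>Y' = V/t\<close>, \<open>V' = (K - t\<^sup>2) Y/t\<close> is Bessel's equation of order \<open>k\<close>,
  with \<open>V = t Y'\<close>.\<close>
lemma bessel_system_liouville: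
  fixes Y V :: "real \<Rightarrow> real" and K t :: real
  assumes dY: "(Y has_real_derivative V t / t) (at t)"
    and dV: "(V has_real_derivative (K - t^2) * Y t / t) (at t)" and t: "t > 0"
  shows "((\<lambda>t. sqrt t * Y t) has_real_derivative (Y t / 2 + V t) / sqrt t) (at t)"
    and "((\<lambda>t. (Y t / 2 + V t) / sqrt t) has_real_derivative ((K - 1/4) / t^2 - 1) * (sqrt t * Y t)) (at t)"
proof -
  obtain s where s: "s > 0" "sqrt t = s" "t = s * s"
    using t by (metis real_sqrt_gt_zero real_sqrt_mult_self abs_of_pos)
  have "((\<lambda>t. sqrt t * Y t) has_real_derivative inverse (sqrt t) / 2 * Y t + V t / t * sqrt t) (at t)"
    by (rule DERIV_mult[OF DERIV_real_sqrt[OF t] dY])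
  then show "((\<lambda>t. sqrt t * Y t) has_real_derivative (Y t / 2 + V t) / sqrt t) (at t)"
    by (rule DERIV_cong) (use s in \<open>simp add: field_simps\<close>)
  have "((\<lambda>t. (Y t / 2 + V t) / sqrt t) has_real_derivative
      ((V t / t / 2 + (K - t^2) * Y t / t) * sqrt t - (Y t / 2 + V t) * (inverse (sqrt t) / 2)) / (sqrt t * sqrt t))
      (at t)"
    by (intro DERIV_divide DERIV_add DERIV_cdivide dY dV DERIV_real_sqrt t) (use t in simp)
  then show "((\<lambda>t. (Y t / 2 + V t) / sqrt t) has_real_derivative ((K - 1/4) / t^2 - 1) * (sqrt t * Y t)) (at t)"
    by (rule DERIV_cong) (use s in \<open>simp add: field_simps power2_eq_square\<close>)
qed

text \<open>The energy \<open>(u\<^sup>2 + U\<^sup>2) exp (\<nu>/t)\<close> is nonincreasing, with derivative \<open>- \<nu> exp (\<nu>/t) (u - U)\<^sup>2 / t\<^sup>2\<close>.\<close>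
lemma bounded_perturbed_oscillator:
  fixes u U :: "real \<Rightarrow> real" and \<nu> :: real
  assumes "\<nu> > 0"
    and du: "\<And>t. t > 0 \<Longrightarrow> (u has_real_derivative U t) (at t)"
    and dU: "\<And>t. t > 0 \<Longrightarrow> (U has_real_derivative (\<nu> / t^2 - 1) * u t) (at t)"
  obtains B where "B \<ge> 0" "\<And>t. t \<ge> 1 \<Longrightarrow> \<bar>u t\<bar> \<le> B \<and> \<bar>U t\<bar> \<le> B"
proof
  define E where "E t = (u t ^ 2 + U t ^ 2) * exp (\<nu> / t)" for t
  have dE: "(E has_real_derivative - (\<nu> * exp (\<nu> / t) * (u t - U t)^2 / t^2)) (at t)" if "t > 0" for t
  proof -
    have "(E has_real_derivative (2 * u t * U t + 2 * U t * ((\<nu> / t^2 - 1) * u t)) * exp (\<nu> / t)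
        + (u t ^ 2 + U t ^ 2) * (exp (\<nu> / t) * (- \<nu> / t^2))) (at t)"
      unfolding E_def [abs_def] using that
      by (auto intro!: derivative_eq_intros du dU simp: power2_eq_square field_simps)
    then show ?thesis by (rule DERIV_cong) (use that in \<open>simp add: field_simps power2_eq_square\<close>)
  qed
  show "sqrt (E 1) \<ge> 0" by (simp add: E_def)
  fix t :: real assume t: "t \<ge> 1"
  have "E t \<le> E 1"
  proof (rule DERIV_nonpos_imp_nonincreasing[OF t])
    fix y assume "1 \<le> y" "y \<le> t"
    with dE[of y] \<open>\<nu> > 0\<close> show "\<exists>d. (E has_real_derivative d) (at y) \<and> d \<le> 0" by force
  qed
  moreover have "u t ^ 2 + U t ^ 2 \<le> E t"
    using mult_left_mono[of 1 "exp (\<nu> / t)" "u t ^ 2 + U t ^ 2"] \<open>\<nu> > 0\<close> t by (simp add: E_def)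
  ultimately have "u t ^ 2 \<le> E 1" "U t ^ 2 \<le> E 1" by (smt (verit) zero_le_power2)+
  then show "\<bar>u t\<bar> \<le> sqrt (E 1) \<and> \<bar>U t\<bar> \<le> sqrt (E 1)"
    using real_sqrt_le_mono by fastforce
qed

text \<open>The oscillating terms cancel: \<open>(u cos t - U sin t)' = - \<nu> u sin t / t\<^sup>2\<close>.\<close>
lemma perturbed_oscillator_phase_deriv:
  fixes u U :: "real \<Rightarrow> real" and \<nu> B t :: real
  assumes "\<nu> > 0" "t \<ge> 1"
    and du: "(u has_real_derivative U t) (at t)"
    and dU: "(U has_real_derivative (\<nu> / t^2 - 1) * u t) (at t)"
    and bounds: "\<bar>u t\<bar> \<le> B" "\<bar>U t\<bar> \<le> B"
  shows "\<exists>d. ((\<lambda>t. (u t * cos t - U t * sin t) / sqrt t) has_real_derivative d) (at t)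
           \<and> \<bar>d\<bar> \<le> (\<nu> + 1) * B / (t * sqrt t)"
proof (intro exI conjI)
  define s where "s = sqrt t"
  have s: "s \<ge> 1" "sqrt t = s" "t = s * s" using \<open>t \<ge> 1\<close> by (simp_all add: s_def)
  define b where "b = u t * cos t - U t * sin t"
  have "((\<lambda>t. u t * cos t - U t * sin t) has_real_derivative - (\<nu> * u t * sin t / t^2)) (at t)"
    using \<open>t \<ge> 1\<close> by (auto intro!: derivative_eq_intros du dU simp: field_simps power2_eq_square)
  then have "((\<lambda>t. (u t * cos t - U t * sin t) / sqrt t) has_real_derivative
      (- (\<nu> * u t * sin t / t^2) * sqrt t - b * (inverse (sqrt t) / 2)) / (sqrt t * sqrt t)) (at t)"
    unfolding b_def using \<open>t \<ge> 1\<close> by (intro DERIV_divide DERIV_real_sqrt) auto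
  then show "((\<lambda>t. (u t * cos t - U t * sin t) / sqrt t) has_real_derivative
      - (\<nu> * (u t * sin t)) / s^5 - b / (2 * s^3)) (at t)"
    by (rule DERIV_cong) (use s in \<open>simp add: field_simps power2_eq_square eval_nat_numeral\<close>)
  have s0: "s > 0" using s by simp
  have "\<bar>u t * sin t\<bar> \<le> \<bar>u t\<bar>" by (simp add: abs_mult mult_left_le)
  then have "\<bar>\<nu> * (u t * sin t)\<bar> \<le> \<nu> * B"
    using bounds \<open>\<nu> > 0\<close> by (simp add: abs_mult mult_left_mono)
  then have "\<bar>- (\<nu> * (u t * sin t)) / s^5\<bar> \<le> \<nu> * B / s^5"
    using s0 by (simp add: divide_right_mono)
  also have "\<dots> \<le> \<nu> * B / s^3"
    using s bounds \<open>\<nu> > 0\<close> by (intro divide_left_mono power_increasing) auto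
  finally have 1: "\<bar>- (\<nu> * (u t * sin t)) / s^5\<bar> \<le> \<nu> * B / s^3" .
  have "\<bar>u t * cos t\<bar> \<le> \<bar>u t\<bar>" "\<bar>U t * sin t\<bar> \<le> \<bar>U t\<bar>"
    by (simp_all add: abs_mult mult_left_le)
  then have "\<bar>b\<bar> \<le> 2 * B" using bounds unfolding b_def by linarith
  then have 2: "\<bar>b / (2 * s^3)\<bar> \<le> B / s^3"
    using s0 by (simp add: field_simps)
  have "\<bar>- (\<nu> * (u t * sin t)) / s^5 - b / (2 * s^3)\<bar> \<le> \<nu> * B / s^3 + B / s^3"
    using 1 2 by linarith
  also have "\<dots> = (\<nu> + 1) * B / (t * sqrt t)"
    using s0 by (simp add: s power3_eq_cube field_simps)
  finally show "\<bar>- (\<nu> * (u t * sin t)) / s^5 - b / (2 * s^3)\<bar> \<le> (\<nu> + 1) * B / (t * sqrt t)" .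
qed

lemma perturbed_oscillator_phase_bounds:
  fixes u U \<phi> :: "real \<Rightarrow> real" and \<nu> :: real
  assumes \<nu>: "\<nu> > 0"
    and du: "\<And>t. t > 0 \<Longrightarrow> (u has_real_derivative U t) (at t)"
    and dU: "\<And>t. t > 0 \<Longrightarrow> (U has_real_derivative (\<nu> / t^2 - 1) * u t) (at t)"
    and \<phi>: "\<And>t. \<phi> t = (u t * cos t - U t * sin t) / sqrt t"
  obtains C where "\<And>t. t \<ge> 1 \<Longrightarrow> \<bar>\<phi> t\<bar> \<le> C / sqrt t"
    and "\<And>a b. 1 \<le> a \<Longrightarrow> a \<le> b \<Longrightarrow> \<bar>\<phi> b - \<phi> a\<bar> \<le> C / sqrt a - C / sqrt b"
proof -
  obtain B where B: "B \<ge> 0" "\<And>t. t \<ge> 1 \<Longrightarrow> \<bar>u t\<bar> \<le> B \<and> \<bar>U t\<bar> \<le> B"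
    using bounded_perturbed_oscillator[OF \<nu> du dU] by blast
  define C where "C = 2 * ((\<nu> + 1) * B)"
  have "\<bar>\<phi> t\<bar> \<le> C / sqrt t" if "t \<ge> 1" for t
  proof -
    have "\<bar>u t * cos t\<bar> \<le> \<bar>u t\<bar>" "\<bar>U t * sin t\<bar> \<le> \<bar>U t\<bar>" "B \<le> (\<nu> + 1) * B"
      using \<nu> B(1) by (simp_all add: abs_mult mult_left_le distrib_right)
    then have "\<bar>u t * cos t - U t * sin t\<bar> \<le> C"
      using B(2)[OF that] abs_triangle_ineq4[of "u t * cos t" "U t * sin t"] unfolding C_def by linarith
    then show ?thesis using that by (simp add: \<phi> abs_divide divide_right_mono)
  qed
  moreover have "\<bar>\<phi> b - \<phi> a\<bar> \<le> C / sqrt a - C / sqrt b" if "1 \<le> a" "a \<le> b" for a b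
  proof -
    have "\<bar>\<phi> b - \<phi> a\<bar> \<le> - (C / sqrt b) - - (C / sqrt a)"
    proof (rule abs_diff_le_of_deriv_le[OF \<open>a \<le> b\<close>, where g' = "\<lambda>y. (\<nu> + 1) * B / (y * sqrt y)"])
      fix y assume "a \<le> y" "y \<le> b"
      then have y: "y \<ge> 1" "y > 0" using that by auto
      show "\<exists>d. (\<phi> has_real_derivative d) (at y) \<and> \<bar>d\<bar> \<le> (\<nu> + 1) * B / (y * sqrt y)"
        unfolding \<phi> [abs_def] using B(2)[OF y(1)]
        by (intro perturbed_oscillator_phase_deriv[OF \<nu> y(1) du dU] y(2)) auto
      have "((\<lambda>t. - (C / sqrt t)) has_real_derivative - (C * (- inverse (sqrt y) / (2 * y)))) (at y)"
        unfolding divide_inverse using y by (auto intro!: derivative_eq_intros simp: real_sqrt_divide field_simps)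
      then show "((\<lambda>t. - (C / sqrt t)) has_real_derivative (\<nu> + 1) * B / (y * sqrt y)) (at y)"
        by (rule DERIV_cong) (use y in \<open>simp add: C_def field_simps\<close>)
    qed
    then show ?thesis by simp
  qed
  ultimately show thesis by (rule that)
qed

lemma bessel_system_phase:
  fixes Y V :: "real \<Rightarrow> real" and K :: real
  assumes "K \<ge> 1"
    and dY: "\<And>t. t > 0 \<Longrightarrow> (Y has_real_derivative V t / t) (at t)"
    and dV: "\<And>t. t > 0 \<Longrightarrow> (V has_real_derivative (K - t^2) * Y t / t) (at t)"
  obtains \<phi> :: "real \<Rightarrow> real" and C :: real
  where "\<And>t. t \<ge> 1 \<Longrightarrow> cos t = 1 \<Longrightarrow> Y t = \<phi> t"
    and "\<And>t. t \<ge> 1 \<Longrightarrow> \<bar>\<phi> t\<bar> \<le> C / sqrt t"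
    and "\<And>a b. 1 \<le> a \<Longrightarrow> a \<le> b \<Longrightarrow> \<bar>\<phi> b - \<phi> a\<bar> \<le> C / sqrt a - C / sqrt b"
proof -
  define u where "u t = sqrt t * Y t" for t
  define U where "U t = (Y t / 2 + V t) / sqrt t" for t
  define \<phi> where "\<phi> t = (u t * cos t - U t * sin t) / sqrt t" for t
  have du: "(u has_real_derivative U t) (at t)"
    and dU: "(U has_real_derivative ((K - 1/4) / t^2 - 1) * u t) (at t)" if "t > 0" for t
    using bessel_system_liouville[OF dY dV, OF that that that]
    unfolding u_def [abs_def] U_def [abs_def] by simp_all
  have "K - 1/4 > 0" using \<open>K \<ge> 1\<close> by simp
  from perturbed_oscillator_phase_bounds[OF this du dU \<phi>_def] obtain C
    where "\<And>t. t \<ge> 1 \<Longrightarrow> \<bar>\<phi> t\<bar> \<le> C / sqrt t"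
      and "\<And>a b. 1 \<le> a \<Longrightarrow> a \<le> b \<Longrightarrow> \<bar>\<phi> b - \<phi> a\<bar> \<le> C / sqrt a - C / sqrt b"
    by blast
  moreover have "Y t = \<phi> t" if "t \<ge> 1" "cos t = 1" for t
    using that sin_cos_squared_add[of t] by (simp add: \<phi>_def u_def)
  ultimately show thesis using that by blast
qed

lemma bessel_system_samples:
  fixes Y V :: "real \<Rightarrow> real" and K :: real and s :: "nat \<Rightarrow> real"
  assumes "K \<ge> 1"
    and dY: "\<And>t. t > 0 \<Longrightarrow> (Y has_real_derivative V t / t) (at t)"
    and dV: "\<And>t. t > 0 \<Longrightarrow> (V has_real_derivative (K - t^2) * Y t / t) (at t)"
    and s: "\<And>m. s m \<ge> 1" "incseq s" "filterlim s at_top sequentially" "\<And>m. cos (s m) = 1"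
  shows "(\<lambda>m. Y (s m)) \<longlonglongrightarrow> 0" and "summable (\<lambda>m. \<bar>Y (s (Suc m)) - Y (s m)\<bar>)"
proof -
  obtain \<phi> C where \<phi>: "\<And>t. t \<ge> 1 \<Longrightarrow> cos t = 1 \<Longrightarrow> Y t = \<phi> t"
    and bound: "\<And>t. t \<ge> 1 \<Longrightarrow> \<bar>\<phi> t\<bar> \<le> C / sqrt t"
    and variation: "\<And>a b. 1 \<le> a \<Longrightarrow> a \<le> b \<Longrightarrow> \<bar>\<phi> b - \<phi> a\<bar> \<le> C / sqrt a - C / sqrt b"
    using bessel_system_phase[OF \<open>K \<ge> 1\<close> dY dV] by blast
  have samples: "Y (s m) = \<phi> (s m)" for m by (rule \<phi>[OF s(1,4)])
  have C0: "(\<lambda>m. C / sqrt (s m)) \<longlonglongrightarrow> 0"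
    unfolding divide_inverse
    by (intro tendsto_mult_right_zero tendsto_inverse_0_at_top filterlim_compose[OF sqrt_at_top s(3)])
  show "(\<lambda>m. Y (s m)) \<longlonglongrightarrow> 0"
    by (rule Lim_null_comparison[OF _ C0]) (simp add: samples bound s(1) always_eventually)
  show "summable (\<lambda>m. \<bar>Y (s (Suc m)) - Y (s m)\<bar>)"
    by (rule summable_comparison_test'[OF telescope_summable'[OF C0]])
      (simp add: samples variation s(1) incseqD[OF s(2)])
qed

section \<open>Power series in \<open>z\<^sup>2/4\<close>\<close>

definition entire_coeffs :: "(nat \<Rightarrow> real) \<Rightarrow> bool" where
  "entire_coeffs c \<longleftrightarrow> (\<forall>w. summable (\<lambda>l. c l * w^l))"

definition entire_sum :: "(nat \<Rightarrow> real) \<Rightarrow> real \<Rightarrow> real" where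
  "entire_sum c w = (\<Sum>l. c l * w^l)"

lemma entire_coeffs_sums: "entire_coeffs c \<Longrightarrow> (\<lambda>l. c l * w^l) sums entire_sum c w"
  unfolding entire_coeffs_def entire_sum_def by (blast intro: summable_sums)

lemma entire_coeffs_summable_abs:
  assumes "entire_coeffs c" shows "summable (\<lambda>l. \<bar>c l * w^l\<bar>)"
proof -
  have "summable (\<lambda>l. c l * (\<bar>w\<bar> + 1)^l)" using assms by (simp add: entire_coeffs_def)
  from powser_insidea[OF this, of w] show ?thesis by simp
qed

lemma entire_coeffs_comparison:
  assumes "entire_coeffs c" "\<And>l. \<bar>d l\<bar> \<le> \<bar>c l\<bar>" shows "entire_coeffs d"
  unfolding entire_coeffs_def
proof
  fix w
  show "summable (\<lambda>l. d l * w^l)"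
  proof (rule summable_comparison_test[OF _ entire_coeffs_summable_abs[OF assms(1), of w]])
    show "\<exists>N. \<forall>l\<ge>N. norm (d l * w^l) \<le> \<bar>c l * w^l\<bar>"
      using assms(2) by (auto simp: abs_mult intro!: mult_right_mono)
  qed
qed

lemma entire_coeffs_add: "entire_coeffs c \<Longrightarrow> entire_coeffs d \<Longrightarrow> entire_coeffs (\<lambda>l. c l + d l)"
  unfolding entire_coeffs_def by (auto simp: distrib_right intro: summable_add)

lemma entire_coeffs_cmult: "entire_coeffs c \<Longrightarrow> entire_coeffs (\<lambda>l. a * c l)"
  unfolding entire_coeffs_def by (auto simp: mult.assoc intro: summable_mult)

lemma entire_coeffs_diff: "entire_coeffs c \<Longrightarrow> entire_coeffs d \<Longrightarrow> entire_coeffs (\<lambda>l. c l - d l)"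
  unfolding entire_coeffs_def by (auto simp: left_diff_distrib intro: summable_diff)

lemma entire_coeffs_inverse_fact: "entire_coeffs (\<lambda>l. inverse (fact l))"
  unfolding entire_coeffs_def using summable_exp by auto

lemma entire_sum_add:
  "entire_coeffs c \<Longrightarrow> entire_coeffs d \<Longrightarrow> entire_sum (\<lambda>l. c l + d l) w = entire_sum c w + entire_sum d w"
  unfolding entire_coeffs_def entire_sum_def by (simp add: distrib_right suminf_add)

lemma entire_sum_diff:
  "entire_coeffs c \<Longrightarrow> entire_coeffs d \<Longrightarrow> entire_sum (\<lambda>l. c l - d l) w = entire_sum c w - entire_sum d w"
  unfolding entire_coeffs_def entire_sum_def by (simp add: left_diff_distrib suminf_diff)

lemma entire_sum_cmult: "entire_coeffs c \<Longrightarrow> entire_sum (\<lambda>l. a * c l) w = a * entire_sum c w"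
  unfolding entire_coeffs_def entire_sum_def by (simp add: mult.assoc suminf_mult)

lemma entire_coeffs_unit_coeff: "entire_coeffs (\<lambda>l. if l = 0 then 1 else 0)"
  unfolding entire_coeffs_def using powser_sums_if[of 0] by (blast intro: sums_summable)

lemma entire_sum_unit_coeff: "entire_sum (\<lambda>l. if l = 0 then 1 else 0) w = 1"
  unfolding entire_sum_def using powser_sums_if[of 0 w] by (simp add: sums_iff)

definition coeff_shift :: "(nat \<Rightarrow> real) \<Rightarrow> nat \<Rightarrow> real" where
  "coeff_shift c l = (if l = 0 then 0 else c (l - 1))"

lemma sums_coeff_shift:
  assumes "entire_coeffs c" shows "(\<lambda>l. coeff_shift c l * w^l) sums (w * entire_sum c w)"
proof -
  have "(\<lambda>l. coeff_shift c (Suc l) * w^(Suc l)) sums (w * entire_sum c w)"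
    using sums_mult[OF entire_coeffs_sums[OF assms], of w] by (simp add: coeff_shift_def mult_ac)
  then show ?thesis by (subst (asm) sums_Suc_iff) (simp add: coeff_shift_def)
qed

lemma entire_coeffs_shift: "entire_coeffs c \<Longrightarrow> entire_coeffs (coeff_shift c)"
  using sums_coeff_shift unfolding entire_coeffs_def by (blast intro: sums_summable)

lemma entire_sum_shift: "entire_coeffs c \<Longrightarrow> entire_sum (coeff_shift c) w = w * entire_sum c w"
  using sums_coeff_shift unfolding entire_sum_def by (blast intro: sums_unique[symmetric])

text \<open>The operator \<open>z d/dz\<close> on \<open>(z/2)^k * entire_sum c (z\<^sup>2/4)\<close> acts on the coefficients.\<close>
definition theta_coeffs :: "nat \<Rightarrow> (nat \<Rightarrow> real) \<Rightarrow> nat \<Rightarrow> real" where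
  "theta_coeffs k c l = (real k + 2 * real l) * c l"

lemma sums_real_mult_coeffs:
  assumes "entire_coeffs c"
  shows "(\<lambda>l. real l * c l * w^l) sums (w * (\<Sum>l. diffs c l * w^l))"
proof -
  have "summable (\<lambda>l. diffs c l * w^l)"
    using assms termdiff_converges_all unfolding entire_coeffs_def by blast
  then have "(\<lambda>l. real (Suc l) * c (Suc l) * w^(Suc l)) sums (w * (\<Sum>l. diffs c l * w^l))"
    using sums_mult[OF summable_sums, of _ w] by (simp add: diffs_def mult_ac)
  then show ?thesis by (subst (asm) sums_Suc_iff) simp
qed

lemma sums_theta_coeffs:
  assumes "entire_coeffs c"
  shows "(\<lambda>l. theta_coeffs k c l * w^l) sums (real k * entire_sum c w + 2 * w * (\<Sum>l. diffs c l * w^l))"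
proof -
  have "(\<lambda>l. real k * (c l * w^l) + 2 * (real l * c l * w^l))
      sums (real k * entire_sum c w + 2 * (w * (\<Sum>l. diffs c l * w^l)))"
    by (intro sums_add sums_mult entire_coeffs_sums sums_real_mult_coeffs assms)
  then show ?thesis by (simp add: theta_coeffs_def algebra_simps)
qed

lemma entire_sum_theta:
  "entire_coeffs c \<Longrightarrow>
    entire_sum (theta_coeffs k c) w = real k * entire_sum c w + 2 * w * (\<Sum>l. diffs c l * w^l)"
  using sums_unique[OF sums_theta_coeffs] by (simp add: entire_sum_def [of "theta_coeffs k c"])

lemma entire_coeffs_theta: "entire_coeffs c \<Longrightarrow> entire_coeffs (theta_coeffs k c)"
  using sums_theta_coeffs by (auto simp: entire_coeffs_def [of "theta_coeffs k c"] intro: sums_summable)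

lemma theta_theta_coeffs: "theta_coeffs k (theta_coeffs k c) l = (real k + 2 * real l)^2 * c l"
  by (simp add: theta_coeffs_def power2_eq_square)

definition bessel_series :: "nat \<Rightarrow> (nat \<Rightarrow> real) \<Rightarrow> real \<Rightarrow> real" where
  "bessel_series k c z = (z/2)^k * entire_sum c (z^2/4)"

lemma bessel_series_add:
  "entire_coeffs c \<Longrightarrow> entire_coeffs d \<Longrightarrow>
    bessel_series k (\<lambda>l. c l + d l) z = bessel_series k c z + bessel_series k d z"
  by (simp add: bessel_series_def entire_sum_add distrib_left)

lemma bessel_series_diff:
  "entire_coeffs c \<Longrightarrow> entire_coeffs d \<Longrightarrow>
    bessel_series k (\<lambda>l. c l - d l) z = bessel_series k c z - bessel_series k d z"
  by (simp add: bessel_series_def entire_sum_diff right_diff_distrib)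

lemma bessel_series_cmult:
  "entire_coeffs c \<Longrightarrow> bessel_series k (\<lambda>l. a * c l) z = a * bessel_series k c z"
  by (simp add: bessel_series_def entire_sum_cmult)

lemma bessel_series_shift:
  "entire_coeffs c \<Longrightarrow> bessel_series k (coeff_shift c) z = z^2/4 * bessel_series k c z"
  by (simp add: bessel_series_def entire_sum_shift)

lemma bessel_series_unit_coeff: "bessel_series k (\<lambda>l. if l = 0 then 1 else 0) z = (z/2)^k"
  by (simp add: bessel_series_def entire_sum_unit_coeff)

lemma bessel_series_sums:
  assumes "entire_coeffs c" shows "(\<lambda>l. c l * (z/2)^(k + 2*l)) sums bessel_series k c z"
proof -
  have "(\<lambda>l. (z/2)^k * (c l * (z^2/4)^l)) sums bessel_series k c z"
    unfolding bessel_series_def by (intro sums_mult entire_coeffs_sums assms)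
  moreover have "(z/2)^k * (c l * (z^2/4)^l) = c l * (z/2)^(k + 2*l)" for l
    by (simp add: power_add power_mult power2_eq_square power_mult_distrib)
  ultimately show ?thesis by simp
qed

lemma bessel_series_deriv:
  assumes "entire_coeffs c" "z > 0"
  shows "(bessel_series k c has_real_derivative bessel_series k (theta_coeffs k c) z / z) (at z)"
proof -
  define S' where "S' w = (\<Sum>l. diffs c l * w^l)" for w
  have "(entire_sum c has_real_derivative S' w) (at w)" for w
    using assms(1) unfolding entire_sum_def S'_def entire_coeffs_def
    by (intro termdiffs_strong_converges_everywhere) auto
  then have "((\<lambda>z. entire_sum c (z^2/4)) has_real_derivative S' (z^2/4) * (2*z/4)) (at z)"
    by (intro DERIV_chain2[where f = "entire_sum c"]) (auto intro!: derivative_eq_intros)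
  moreover have "((\<lambda>z. (z/2)^k) has_real_derivative real k * (z/2)^(k-1) * (1/2)) (at z)"
    by (auto intro!: derivative_eq_intros)
  ultimately have "(bessel_series k c has_real_derivative
      real k * (z/2)^(k-1) * (1/2) * entire_sum c (z^2/4) + S' (z^2/4) * (2*z/4) * (z/2)^k) (at z)"
    unfolding bessel_series_def [abs_def] using DERIV_mult by blast
  moreover have "real k * (z/2)^(k-1) * (1/2) * entire_sum c (z^2/4) + S' (z^2/4) * (2*z/4) * (z/2)^k
      = bessel_series k (theta_coeffs k c) z / z"
    using assms(2) by (cases k)
      (simp_all add: bessel_series_def entire_sum_theta[OF assms(1)] S'_def field_simps power2_eq_square)
  ultimately show ?thesis by (rule DERIV_cong)
qed

section \<open>The series of \<open>J\<^sub>k\<close>, \<open>Y\<^sub>k\<close>, \<open>P\<^sub>k\<close> and \<open>Q\<^sub>k\<close>\<close>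

definition bessel_coeffs :: "nat \<Rightarrow> (nat \<Rightarrow> real) \<Rightarrow> nat \<Rightarrow> real" where
  "bessel_coeffs k a l = (-1)^l * a l / (fact l * fact (k + l))"

abbreviation besselJ_coeffs :: "nat \<Rightarrow> nat \<Rightarrow> real" where
  "besselJ_coeffs k \<equiv> bessel_coeffs k (\<lambda>_. 1)"

lemma entire_coeffs_bessel_coeffs:
  assumes "\<And>l. \<bar>a l\<bar> \<le> real k + 2 * real l + 2"
  shows "entire_coeffs (bessel_coeffs k a)"
proof (rule entire_coeffs_comparison)
  show "entire_coeffs (\<lambda>l. theta_coeffs k (\<lambda>l. inverse (fact l)) l + 2 * inverse (fact l))"
    by (intro entire_coeffs_add entire_coeffs_cmult entire_coeffs_theta entire_coeffs_inverse_fact)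
  fix l
  have "\<bar>bessel_coeffs k a l\<bar> = \<bar>a l\<bar> / (fact l * fact (k + l))"
    by (simp add: bessel_coeffs_def abs_mult)
  also have "\<dots> \<le> (real k + 2 * real l + 2) / (fact l * fact (k + l))"
    by (intro divide_right_mono assms) simp
  also have "\<dots> \<le> (real k + 2 * real l + 2) / fact l"
    by (intro divide_left_mono) (auto simp: fact_ge_1)
  also have "\<dots> = \<bar>theta_coeffs k (\<lambda>l. inverse (fact l)) l + 2 * inverse (fact l)\<bar>"
    by (simp add: theta_coeffs_def field_simps)
  finally show "\<bar>bessel_coeffs k a l\<bar> \<le> \<bar>theta_coeffs k (\<lambda>l. inverse (fact l)) l + 2 * inverse (fact l)\<bar>" .
qed

lemma bessel_coeffs_Suc:
  "bessel_coeffs k a (Suc m)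
     = - a (Suc m) / ((real m + 1) * (real (k + m) + 1)) * besselJ_coeffs k m"
  by (simp add: bessel_coeffs_def algebra_simps)

lemma sums_bessel_coeffs:
  assumes "\<And>l. \<bar>a l\<bar> \<le> real k + 2 * real l + 2"
  shows "(\<lambda>l. (-1)^l * (z/2)^(k + 2*l) * a l / (fact l * fact (k + l)))
           sums bessel_series k (bessel_coeffs k a) z"
  using bessel_series_sums[OF entire_coeffs_bessel_coeffs[OF assms]]
  by (simp add: bessel_coeffs_def mult_ac)

lemma abs_Digamma_real_Suc_le: "\<bar>Digamma (real l + 1)\<bar> \<le> real l + 1"
proof (induction l)
  case 0
  then show ?case using euler_mascheroni_pos euler_mascheroni_less_13_over_22 by simp
next
  case (Suc l)
  have "Digamma (real (Suc l) + 1) = Digamma (real l + 1) + 1 / (real l + 1)"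
    using Digamma_plus1[of "real l + 1"] by (simp add: add_ac)
  moreover have "0 \<le> 1 / (real l + 1)" "1 / (real l + 1) \<le> 1" by (simp_all add: field_simps)
  ultimately show ?case using Suc.IH by (simp only: abs_le_iff of_nat_Suc) linarith
qed

definition digamma_pair :: "nat \<Rightarrow> nat \<Rightarrow> real" where
  "digamma_pair k l = Digamma (real l + 1) + Digamma (real (k + l) + 1)"

abbreviation besselY_coeffs :: "nat \<Rightarrow> nat \<Rightarrow> real" where
  "besselY_coeffs k \<equiv> bessel_coeffs k (digamma_pair k)"

lemma abs_digamma_pair_le: "\<bar>digamma_pair k l\<bar> \<le> real k + 2 * real l + 2"
  using abs_Digamma_real_Suc_le[of l] abs_Digamma_real_Suc_le[of "k + l"]
  unfolding digamma_pair_def by linarith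

lemma entire_coeffs_besselJ: "entire_coeffs (besselJ_coeffs k)"
  by (rule entire_coeffs_bessel_coeffs) simp

lemma entire_coeffs_besselY: "entire_coeffs (besselY_coeffs k)"
  by (rule entire_coeffs_bessel_coeffs[OF abs_digamma_pair_le])

lemma besselJ_eq_bessel_series: "besselJ k z = bessel_series k (besselJ_coeffs k) z"
  using sums_bessel_coeffs[of "\<lambda>_. 1" k z] unfolding besselJ_def by (simp add: sums_iff)

lemma pi_besselY_eq:
  "pi * besselY k z = 2 * ln (z/2) * besselJ k z
     - (\<Sum>r<k. fact (k - r - 1) / fact r * (z/2) powi (2 * int r - int k)) - bessel_series k (besselY_coeffs k) z"
proof -
  have "(\<Sum>l. (-1)^l * (z/2)^(k + 2*l) * (Digamma (real l + 1) + Digamma (real (k + l) + 1))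
      / (fact l * fact (k + l))) = bessel_series k (besselY_coeffs k) z"
    using sums_bessel_coeffs[OF abs_digamma_pair_le, of z] unfolding digamma_pair_def by (simp add: sums_iff)
  then show ?thesis by (simp add: besselY_def field_simps)
qed

definition digamma_diff :: "nat \<Rightarrow> nat \<Rightarrow> real" where
  "digamma_diff k l = Digamma (real (k + l) + 1) - Digamma (real l + 1)"

definition digamma_euler :: "nat \<Rightarrow> nat \<Rightarrow> real" where
  "digamma_euler k l = Digamma (real (k + l) + 1) + euler_mascheroni"

lemma abs_digamma_diff_le: "\<bar>digamma_diff k l\<bar> \<le> real k + 2 * real l + 2"
  using abs_Digamma_real_Suc_le[of l] abs_Digamma_real_Suc_le[of "k + l"]
  unfolding digamma_diff_def by linarith

lemma abs_digamma_euler_le: "\<bar>digamma_euler k l\<bar> \<le> real k + 2 * real l + 2"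
  using abs_Digamma_real_Suc_le[of "k + l"] euler_mascheroni_pos euler_mascheroni_less_13_over_22
  unfolding digamma_euler_def by (simp add: abs_le_iff)

lemma P_fun_eq_bessel_series:
  "P_fun k z = - (\<Sum>r\<in>{(k + 1) div 2 ..< k}. fact (k - r - 1) / fact r * (z/2)^(2*r - k))
     + bessel_series k (bessel_coeffs k (digamma_diff k)) z"
  using sums_bessel_coeffs[OF abs_digamma_diff_le, of z]
  unfolding P_fun_def digamma_diff_def [symmetric] by (simp add: sums_iff)

lemma Q_fun_eq_bessel_series: "Q_fun k z = bessel_series k (bessel_coeffs k (digamma_euler k)) z"
  using sums_bessel_coeffs[OF abs_digamma_euler_le, of z]
  unfolding Q_fun_def digamma_euler_def [symmetric] by (simp add: sums_iff)

section \<open>Bessel's equation for \<open>Y\<^sub>k\<close>\<close>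

lemma theta_theta_besselJ_coeffs:
  "theta_coeffs k (theta_coeffs k (besselJ_coeffs k)) l
     = real k ^ 2 * besselJ_coeffs k l - 4 * coeff_shift (besselJ_coeffs k) l"
proof (cases l)
  case 0
  then show ?thesis by (simp add: theta_coeffs_def coeff_shift_def power2_eq_square)
next
  case (Suc m)
  define c where "c = besselJ_coeffs k m"
  define D where "D = (real m + 1) * (real k + real m + 1)"
  have D: "D > 0" by (simp add: D_def add_pos_nonneg)
  have J: "besselJ_coeffs k (Suc m) = - c / D"
    by (simp add: c_def D_def bessel_coeffs_Suc[of k _ m] add_ac)
  have "theta_coeffs k (theta_coeffs k (besselJ_coeffs k)) l = (real k + 2 * real (Suc m))^2 * (- c / D)"
    by (simp add: Suc theta_theta_coeffs J)
  also have "\<dots> = real k ^ 2 * (- c / D) - 4 * c"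
    using D by (simp add: D_def field_simps power2_eq_square)
  also have "\<dots> = real k ^ 2 * besselJ_coeffs k l - 4 * coeff_shift (besselJ_coeffs k) l"
    by (simp add: Suc J coeff_shift_def c_def)
  finally show ?thesis .
qed

lemma bessel_coeffs_eq_mult: "bessel_coeffs k a l = a l * besselJ_coeffs k l"
  by (simp add: bessel_coeffs_def)

lemma digamma_pair_Suc:
  "digamma_pair k (Suc m) = digamma_pair k m + 1 / (real m + 1) + 1 / (real (k + m) + 1)"
  using Digamma_plus1[of "real m + 1"] Digamma_plus1[of "real (k + m) + 1"]
  by (simp add: digamma_pair_def add_ac)

lemma theta_theta_besselY_coeffs:
  assumes "k \<ge> 1"
  shows "theta_coeffs k (theta_coeffs k (besselY_coeffs k)) l
     = real k ^ 2 * besselY_coeffs k l - 4 * coeff_shift (besselY_coeffs k) l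
       + 4 * theta_coeffs k (besselJ_coeffs k) l - 4 / fact (k - 1) * (if l = 0 then 1 else 0)"
proof (cases l)
  case 0
  have "real k / fact k = 1 / (fact (k - 1) :: real)"
    using assms by (simp add: fact_reduce[of k])
  then show ?thesis using 0 by (simp add: theta_coeffs_def coeff_shift_def bessel_coeffs_def power2_eq_square)
next
  case (Suc m)
  define c where "c = besselJ_coeffs k m"
  define g where "g = digamma_pair k m"
  define M where "M = real m + 1"
  define N where "N = real k + real m + 1"
  have J: "besselJ_coeffs k (Suc m) = - c / (M * N)"
    by (simp add: c_def M_def N_def bessel_coeffs_Suc[of k _ m] add_ac)
  have Y: "besselY_coeffs k (Suc m) = - (g + 1 / M + 1 / N) * c / (M * N)"
    by (simp add: c_def g_def M_def N_def bessel_coeffs_Suc[of k _ m] digamma_pair_Suc add_ac)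
  have "M > 0" "N > 0" by (simp_all add: M_def N_def add_pos_nonneg)
  have "(real k + 2 * M)^2 * (- (g + 1 / M + 1 / N) * c / (M * N))
      = real k ^ 2 * (- (g + 1 / M + 1 / N) * c / (M * N)) - 4 * (g * c)
        + 4 * ((real k + 2 * M) * (- c / (M * N)))"
  proof -
    have k: "real k = N - M" by (simp add: M_def N_def)
    show ?thesis unfolding k using \<open>M > 0\<close> \<open>N > 0\<close> by (simp add: field_simps power2_eq_square)
  qed
  then have "(real k + 2 * M)^2 * besselY_coeffs k (Suc m)
      = real k ^ 2 * besselY_coeffs k (Suc m) - 4 * (g * c) + 4 * ((real k + 2 * M) * besselJ_coeffs k (Suc m))"
    by (simp only: Y J)
  moreover have "theta_coeffs k (theta_coeffs k (besselY_coeffs k)) l = (real k + 2 * M)^2 * besselY_coeffs k (Suc m)"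
    by (simp add: Suc theta_theta_coeffs M_def)
  moreover have "coeff_shift (besselY_coeffs k) l = g * c"
    by (simp add: Suc coeff_shift_def c_def g_def bessel_coeffs_eq_mult[of k "digamma_pair k" m])
  moreover have "theta_coeffs k (besselJ_coeffs k) l = (real k + 2 * M) * besselJ_coeffs k (Suc m)"
    by (simp add: Suc theta_coeffs_def M_def)
  ultimately show ?thesis by (simp add: Suc)
qed

lemma bessel_series_theta_theta_besselJ:
  "bessel_series k (theta_coeffs k (theta_coeffs k (besselJ_coeffs k))) z
     = (real k ^ 2 - z^2) * bessel_series k (besselJ_coeffs k) z"
proof -
  note J = entire_coeffs_besselJ[of k]
  have "bessel_series k (theta_coeffs k (theta_coeffs k (besselJ_coeffs k))) z
      = bessel_series k (\<lambda>l. real k ^ 2 * besselJ_coeffs k l - 4 * coeff_shift (besselJ_coeffs k) l) z"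
    by (rule arg_cong[where f = "\<lambda>c. bessel_series k c z"], rule ext, rule theta_theta_besselJ_coeffs)
  also have "\<dots> = real k ^ 2 * bessel_series k (besselJ_coeffs k) z - 4 * (z^2/4 * bessel_series k (besselJ_coeffs k) z)"
    by (simp add: J entire_coeffs_shift entire_coeffs_cmult bessel_series_diff bessel_series_cmult bessel_series_shift)
  finally show ?thesis by (simp add: algebra_simps)
qed

lemma bessel_series_theta_theta_besselY:
  assumes "k \<ge> 1"
  shows "bessel_series k (theta_coeffs k (theta_coeffs k (besselY_coeffs k))) z
     = (real k ^ 2 - z^2) * bessel_series k (besselY_coeffs k) z
       + 4 * bessel_series k (theta_coeffs k (besselJ_coeffs k)) z - 4 / fact (k - 1) * (z/2)^k"
proof -
  note J = entire_coeffs_besselJ[of k] and Y = entire_coeffs_besselY[of k]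
  define u :: "nat \<Rightarrow> real" where "u l = (if l = 0 then 1 else 0)" for l
  define \<kappa> :: real where "\<kappa> = 4 / fact (k - 1)"
  have "bessel_series k (theta_coeffs k (theta_coeffs k (besselY_coeffs k))) z
      = bessel_series k (\<lambda>l. (real k ^ 2 * besselY_coeffs k l - 4 * coeff_shift (besselY_coeffs k) l)
          + (4 * theta_coeffs k (besselJ_coeffs k) l - \<kappa> * u l)) z"
    by (rule arg_cong[where f = "\<lambda>c. bessel_series k c z"], rule ext)
      (simp add: theta_theta_besselY_coeffs[OF assms] u_def \<kappa>_def)
  also have "\<dots> = (real k ^ 2 * bessel_series k (besselY_coeffs k) z - 4 * (z^2/4 * bessel_series k (besselY_coeffs k) z))
      + (4 * bessel_series k (theta_coeffs k (besselJ_coeffs k)) z - \<kappa> * (z/2)^k)"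
    using entire_coeffs_unit_coeff bessel_series_unit_coeff[of k z] unfolding u_def [symmetric]
    by (simp add: J Y entire_coeffs_add entire_coeffs_diff entire_coeffs_shift entire_coeffs_cmult
        entire_coeffs_theta bessel_series_add bessel_series_diff bessel_series_cmult bessel_series_shift)
  finally show ?thesis by (simp add: \<kappa>_def algebra_simps)
qed

text \<open>\<open>bessel_laurent k j\<close> is \<open>(z d/dz)\<^sup>j\<close> applied to the finite sum in \<open>\<pi> Y\<^sub>k\<close>.\<close>
definition bessel_laurent :: "nat \<Rightarrow> nat \<Rightarrow> real \<Rightarrow> real" where
  "bessel_laurent k j z =
     (\<Sum>r<k. fact (k - r - 1) / fact r * (2 * real r - real k)^j * (z/2) powr (2 * real r - real k))"

lemma has_real_derivative_half_powr:
  assumes "z > 0" shows "((\<lambda>z. (z/2) powr p) has_real_derivative p * (z/2) powr p / z) (at z)"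
proof -
  have "((\<lambda>z. (z/2) powr p) has_real_derivative p * (z/2) powr (p - 1) * (1/2)) (at z)"
    using assms by (auto intro!: derivative_eq_intros)
  moreover have "p * (z/2) powr (p - 1) * (1/2) = p * (z/2) powr p / z"
    using assms by (simp add: powr_diff field_simps)
  ultimately show ?thesis by (rule DERIV_cong)
qed

lemma bessel_laurent_deriv:
  assumes "z > 0"
  shows "(bessel_laurent k j has_real_derivative bessel_laurent k (Suc j) z / z) (at z)"
proof -
  have "((\<lambda>z. fact (k - r - 1) / fact r * (2 * real r - real k)^j * (z/2) powr (2 * real r - real k))
      has_real_derivative fact (k - r - 1) / fact r * (2 * real r - real k)^(Suc j)
        * (z/2) powr (2 * real r - real k) / z) (at z)" for r
    by (rule DERIV_cong[OF DERIV_cmult[OF has_real_derivative_half_powr[OF assms]]]) (simp add: mult_ac)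
  then show ?thesis
    unfolding bessel_laurent_def [abs_def] sum_divide_distrib by (intro DERIV_sum)
qed

lemma bessel_laurent_coeff_step:
  assumes "Suc q < k"
  shows "fact (k - Suc q - 1) / fact (Suc q) * ((2 * real (Suc q) - real k)^2 - real k ^ 2)
     = - 4 * (fact (k - q - 1) / fact q :: real)"
proof -
  define d where "d = k - q - 2"
  have kd: "k = q + 2 + d" using assms by (simp add: d_def)
  have e: "(2 * real (Suc q) - real k)^2 - real k ^ 2 = - 4 * (real q + 1) * (real d + 1)"
    by (simp add: kd power2_eq_square algebra_simps)
  have f: "fact (k - Suc q - 1) = (fact d :: real)" "fact (Suc q) = (real q + 1) * (fact q :: real)"
    "fact (k - q - 1) = (real d + 1) * (fact d :: real)"
    by (simp_all add: kd numeral_2_eq_2 algebra_simps)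
  have "(real q + 1) * fact q \<noteq> (0::real)" by (simp add: add_nonneg_eq_0_iff)
  then show ?thesis unfolding e f by (simp add: field_simps)
qed

lemma bessel_laurent_equation:
  assumes "k \<ge> 1" "z > 0"
  shows "bessel_laurent k 2 z - (real k ^ 2 - z^2) * bessel_laurent k 0 z = 4 / fact (k - 1) * (z/2)^k"
proof -
  define X where "X = z/2"
  define a where "a r = fact (k - r - 1) / fact r * X powr (2 * real r - real k)" for r
  define T where "T r = (if r = 0 then 0 else 4 * a (r - 1) * X powr 2)" for r
  have X: "X > 0" using assms by (simp add: X_def)
  have "(2 * real r - real k)^2 * a r - (real k ^ 2 - z^2) * a r = T (Suc r) - T r" if "r < k" for r
  proof -
    have "((2 * real r - real k)^2 - real k ^ 2) * a r = - T r"
    proof (cases r)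
      case (Suc q)
      have "X powr (2 * real r - real k) = X powr (2 * real q - real k) * X powr 2"
        using powr_add[of X "2 * real q - real k" 2] by (simp add: Suc algebra_simps)
      then have "((2 * real r - real k)^2 - real k ^ 2) * a r
          = (fact (k - Suc q - 1) / fact (Suc q) * ((2 * real (Suc q) - real k)^2 - real k ^ 2))
            * (X powr (2 * real q - real k) * X powr 2)"
        by (simp add: a_def Suc)
      also have "\<dots> = - T r"
        unfolding bessel_laurent_coeff_step[of q k, OF that[unfolded Suc]] by (simp add: T_def a_def Suc)
      finally show ?thesis .
    qed (simp add: T_def)
    moreover have "z^2 * a r = T (Suc r)"
      using X by (simp add: T_def X_def a_def powr_add[symmetric] powr_realpow algebra_simps power2_eq_square)
    ultimately show ?thesis by (simp add: algebra_simps)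
  qed
  then have "bessel_laurent k 2 z - (real k ^ 2 - z^2) * bessel_laurent k 0 z = (\<Sum>r<k. T (Suc r) - T r)"
    unfolding bessel_laurent_def sum_distrib_left sum_subtractf[symmetric] X_def [symmetric]
    by (intro sum.cong) (auto simp: a_def algebra_simps)
  also have "\<dots> = T k - T 0" by (rule sum_lessThan_telescope)
  also have "\<dots> = 4 / fact (k - 1) * X ^ k"
  proof -
    have "X powr (real k - 2) * X powr 2 = X ^ k"
      using X by (simp only: powr_add[symmetric]) (simp add: powr_realpow)
    then show ?thesis using assms by (simp add: T_def a_def)
  qed
  finally show ?thesis by (simp add: X_def)
qed

lemma besselY_eq_bessel_series:
  assumes "z > 0"
  shows "besselY k z = 2/pi * ln (z/2) * bessel_series k (besselJ_coeffs k) z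
           - bessel_laurent k 0 z / pi - bessel_series k (besselY_coeffs k) z / pi"
proof -
  have "(\<Sum>r<k. fact (k - r - 1) / fact r * (z/2) powi (2 * int r - int k)) = bessel_laurent k 0 z"
    unfolding bessel_laurent_def
    by (intro sum.cong refl) (use assms in \<open>simp add: powr_real_of_int' [symmetric]\<close>)
  moreover have "besselY k z = (pi * besselY k z) / pi" by simp
  ultimately show ?thesis
    unfolding pi_besselY_eq by (simp add: besselJ_eq_bessel_series diff_divide_distrib)
qed

text \<open>\<open>besselY_theta k z = z Y\<^sub>k'(z)\<close>.\<close>
definition besselY_theta :: "nat \<Rightarrow> real \<Rightarrow> real" where
  "besselY_theta k z =
     2/pi * (bessel_series k (besselJ_coeffs k) z + ln (z/2) * bessel_series k (theta_coeffs k (besselJ_coeffs k)) z)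
     - bessel_laurent k 1 z / pi - bessel_series k (theta_coeffs k (besselY_coeffs k)) z / pi"

lemma besselY_deriv:
  assumes "z > 0" shows "(besselY k has_real_derivative besselY_theta k z / z) (at z)"
proof (rule has_field_derivative_transform_within_open[where S = "{0<..}"])
  note d = bessel_series_deriv[OF entire_coeffs_besselJ assms] bessel_series_deriv[OF entire_coeffs_besselY assms]
    bessel_laurent_deriv[OF assms]
  have "((\<lambda>z. 2/pi * ln (z/2) * bessel_series k (besselJ_coeffs k) z - bessel_laurent k 0 z / pi
      - bessel_series k (besselY_coeffs k) z / pi) has_real_derivative
      2/pi * (1/z) * bessel_series k (besselJ_coeffs k) z
      + 2/pi * ln (z/2) * (bessel_series k (theta_coeffs k (besselJ_coeffs k)) z / z)
      - (bessel_laurent k 1 z / z) / pi - (bessel_series k (theta_coeffs k (besselY_coeffs k)) z / z) / pi) (at z)"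
    using assms by (auto intro!: derivative_eq_intros d simp: field_simps)
  then show "((\<lambda>z. 2/pi * ln (z/2) * bessel_series k (besselJ_coeffs k) z - bessel_laurent k 0 z / pi
      - bessel_series k (besselY_coeffs k) z / pi) has_real_derivative besselY_theta k z / z) (at z)"
    by (rule DERIV_cong) (use assms pi_gt_zero in \<open>simp add: besselY_theta_def field_simps\<close>)
qed (use assms besselY_eq_bessel_series in auto)

lemma besselY_theta_deriv:
  assumes "k \<ge> 1" "z > 0"
  shows "(besselY_theta k has_real_derivative (real k ^ 2 - z^2) * besselY k z / z) (at z)"
proof -
  note d = bessel_series_deriv[OF entire_coeffs_besselJ assms(2)]
    bessel_series_deriv[OF entire_coeffs_theta[OF entire_coeffs_besselJ] assms(2)]
    bessel_series_deriv[OF entire_coeffs_theta[OF entire_coeffs_besselY] assms(2)]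
    bessel_laurent_deriv[OF assms(2)]
  have L: "bessel_laurent k 2 z = (real k ^ 2 - z^2) * bessel_laurent k 0 z + 4 / fact (k - 1) * (z/2)^k"
    using bessel_laurent_equation[OF assms] by (simp add: algebra_simps)
  have "(besselY_theta k has_real_derivative
      2/pi * (bessel_series k (theta_coeffs k (besselJ_coeffs k)) z / z
        + ((1/z) * bessel_series k (theta_coeffs k (besselJ_coeffs k)) z
           + ln (z/2) * (bessel_series k (theta_coeffs k (theta_coeffs k (besselJ_coeffs k))) z / z)))
      - (bessel_laurent k 2 z / z) / pi
      - (bessel_series k (theta_coeffs k (theta_coeffs k (besselY_coeffs k))) z / z) / pi) (at z)"
    unfolding besselY_theta_def [abs_def] numeral_2_eq_2 using assms
    by (auto intro!: derivative_eq_intros d)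
  then show ?thesis
    by (rule DERIV_cong) (use assms pi_gt_zero in \<open>simp add: L bessel_series_theta_theta_besselJ
        bessel_series_theta_theta_besselY[OF assms(1)] besselY_eq_bessel_series field_simps\<close>)
qed

lemma besselJ_P_Q_eq_besselY:
  fixes X :: real
  assumes "X > 0"
  shows "2 * (euler_mascheroni + ln X) * besselJ k (2*X) + P_fun k (2*X) - 2 * Q_fun k (2*X)
     = pi * besselY k (2*X) + (\<Sum>r<k. fact (k - r - 1) / fact r * X powi (2 * int r - int k))
       - (\<Sum>r\<in>{(k + 1) div 2 ..< k}. fact (k - r - 1) / fact r * X^(2*r - k))"
proof -
  note J = entire_coeffs_besselJ[of k] and Y = entire_coeffs_besselY[of k]
    and D = entire_coeffs_bessel_coeffs[OF abs_digamma_diff_le, of k]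
    and E = entire_coeffs_bessel_coeffs[OF abs_digamma_euler_le, of k]
  have "(\<lambda>l. 2 * euler_mascheroni * besselJ_coeffs k l + bessel_coeffs k (digamma_diff k) l)
      = (\<lambda>l. 2 * bessel_coeffs k (digamma_euler k) l - besselY_coeffs k l)"
    by (simp add: fun_eq_iff bessel_coeffs_def digamma_diff_def digamma_euler_def digamma_pair_def field_simps)
  from arg_cong[where f = "\<lambda>c. bessel_series k c (2*X)", OF this]
  have "2 * euler_mascheroni * besselJ k (2*X) + bessel_series k (bessel_coeffs k (digamma_diff k)) (2*X)
      = 2 * Q_fun k (2*X) - bessel_series k (besselY_coeffs k) (2*X)"
    by (simp add: J Y D E entire_coeffs_cmult bessel_series_add bessel_series_diff bessel_series_cmult
        besselJ_eq_bessel_series Q_fun_eq_bessel_series)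
  then show ?thesis
    using P_fun_eq_bessel_series[of k "2*X"] pi_besselY_eq[of k "2*X"] by (simp add: algebra_simps)
qed

lemma laurent_low_half_sum:
  fixes X :: real
  assumes "X > 0"
  shows "(\<Sum>r<2*n. fact (2*n - r - 1) / fact r * X powi (2 * int r - int (2*n)))
       - (\<Sum>r\<in>{(2*n + 1) div 2 ..< 2*n}. fact (2*n - r - 1) / fact r * X^(2*r - 2*n))
     = (\<Sum>r<n. fact (n + r) / fact (n - r - 1) * (1 / X^(2*r+2)))"
proof -
  define f where "f r = fact (2*n - r - 1) / fact r * X powi (2 * int r - int (2*n))" for r
  have "(\<Sum>r<2*n. f r) = (\<Sum>r<n. f r) + (\<Sum>r\<in>{n..<2*n}. f r)"
    by (subst sum.union_disjoint[symmetric]) (auto intro: sum.cong)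
  moreover have "(\<Sum>r\<in>{n..<2*n}. f r) = (\<Sum>r\<in>{(2*n + 1) div 2 ..< 2*n}. fact (2*n - r - 1) / fact r * X^(2*r - 2*n))"
    by (intro sum.cong) (auto simp: f_def power_int_of_nat [symmetric] of_nat_diff)
  moreover have "(\<Sum>r<n. f r) = (\<Sum>r<n. fact (n + r) / fact (n - r - 1) * (1 / X^(2*r+2)))"
  proof -
    have "(\<Sum>r<n. f r) = (\<Sum>i<n. f (n - Suc i))" by (rule sum.nat_diff_reindex[symmetric])
    also have "\<dots> = (\<Sum>r<n. fact (n + r) / fact (n - r - 1) * (1 / X^(2*r+2)))"
    proof (rule sum.cong[OF refl])
      fix i assume "i \<in> {..<n}"
      then have "2 * int (n - Suc i) - int (2*n) = - int (2*i+2)" "2 * n - (n - Suc i) - 1 = n + i"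
        by auto
      moreover have "X powi (- int (2*i+2)) = 1 / X^(2*i+2)"
        using power_int_minus[of X "int (2*i+2)"] by (simp only: power_int_of_nat inverse_eq_divide)
      ultimately show "f (n - Suc i) = fact (n + i) / fact (n - i - 1) * (1 / X^(2*i+2))"
        by (simp add: f_def)
    qed
    finally show ?thesis .
  qed
  ultimately show ?thesis unfolding f_def [symmetric] by linarith
qed

lemma besselJ_P_Q_eq_besselY_even:
  fixes X :: real
  assumes "X > 0"
  shows "2 * (euler_mascheroni + ln X) * besselJ (2*n) (2*X) + P_fun (2*n) (2*X) - 2 * Q_fun (2*n) (2*X)
     = pi * besselY (2*n) (2*X) + (\<Sum>r<n. fact (n + r) / fact (n - r - 1) * (1 / X^(2*r+2)))"
  using besselJ_P_Q_eq_besselY[OF assms, of "2*n"] laurent_low_half_sum[OF assms, of n] by simp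

lemma summable_besselY_mult:
  fixes b :: "nat \<Rightarrow> real"
  assumes "k \<ge> 1" "p \<ge> 1" and bounded: "\<And>N. \<bar>\<Sum>m<N. b m\<bar> \<le> C"
  shows "summable (\<lambda>m. besselY k (2 * pi * real p * real (Suc m)) * b m)"
proof -
  define s where "s m = 2 * pi * real p * real (Suc m)" for m
  have "1 \<le> 2 * pi * 1 * 1" using pi_gt3 by simp
  also have "\<dots> \<le> s m" for m
    unfolding s_def using \<open>p \<ge> 1\<close> by (intro mult_mono) auto
  finally have s1: "s m \<ge> 1" for m .
  have "incseq s" by (intro incseq_SucI) (simp add: s_def mult_left_mono)
  have "filterlim s at_top sequentially"
    unfolding s_def using \<open>p \<ge> 1\<close>
    by (intro filterlim_tendsto_pos_mult_at_top[OF tendsto_const]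
        filterlim_compose[OF filterlim_real_sequentially filterlim_Suc]) auto
  moreover have "cos (s m) = 1" for m
    using cos_2npi[of "p * Suc m"] by (simp add: s_def algebra_simps)
  moreover have "real k ^ 2 \<ge> 1" using \<open>k \<ge> 1\<close> by simp
  ultimately have "(\<lambda>m. besselY k (s m)) \<longlonglongrightarrow> 0" "summable (\<lambda>m. \<bar>besselY k (s (Suc m)) - besselY k (s m)\<bar>)"
    using bessel_system_samples[OF _ besselY_deriv besselY_theta_deriv[OF \<open>k \<ge> 1\<close>] s1 \<open>incseq s\<close>]
    by blast+
  from summable_Dirichlet[OF this bounded] show ?thesis by (simp add: s_def)
qed

lemma summable_besselY_cos:
  assumes "k \<ge> 1" "0 < x" "x < 1"
  shows "summable (\<lambda>m. besselY k (4*pi*real (Suc m)) * cos (2*pi*real (Suc m)*x))"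
proof -
  have "sin (2*pi*x / 2) > 0" using assms by (simp add: sin_gt_zero)
  from abs_sum_cos_le[of "2*pi*x"] this
  have "\<bar>\<Sum>m<N. cos (2*pi*real (Suc m)*x)\<bar> \<le> 1 / \<bar>sin (2*pi*x / 2)\<bar>" for N
    by (simp add: mult_ac)
  from summable_besselY_mult[of k 2, OF assms(1) _ this] show ?thesis by (simp add: mult_ac)
qed

lemma summable_bounded_mult_inverse_powers:
  fixes a c :: "nat \<Rightarrow> real"
  assumes "\<And>m. \<bar>c m\<bar> \<le> 1"
  shows "summable (\<lambda>m. c m * (\<Sum>r<n. a r * (1 / (2 * pi * real (Suc m))^(2*r+2))))"
proof (rule summable_comparison_test')
  show "summable (\<lambda>m. (\<Sum>r<n. \<bar>a r\<bar>) * inverse (real (Suc m) ^ 2))"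
  proof (rule summable_mult)
    show "summable (\<lambda>m. inverse (real (Suc m) ^ 2))"
      using inverse_power_summable[of 2, where 'a = real] by (subst summable_Suc_iff) simp
  qed
  fix m
  have inv_le: "1 / (2 * pi * real (Suc m))^(2*r+2) \<le> inverse (real (Suc m) ^ 2)" for r
  proof -
    have X: "1 \<le> real (Suc m)" "real (Suc m) \<le> 2 * pi * real (Suc m)" using pi_gt3 by simp_all
    then have "real (Suc m) ^ 2 \<le> (2 * pi * real (Suc m)) ^ 2" by (intro power_mono) auto
    also have "\<dots> \<le> (2 * pi * real (Suc m))^(2*r+2)" by (rule power_increasing) (simp, use X in linarith)
    finally have "inverse ((2 * pi * real (Suc m))^(2*r+2)) \<le> inverse (real (Suc m) ^ 2)"
      by (rule le_imp_inverse_le) simp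
    then show ?thesis by (simp add: inverse_eq_divide)
  qed
  have term_le: "\<bar>a r * (1 / (2 * pi * real (Suc m))^(2*r+2))\<bar> \<le> \<bar>a r\<bar> * inverse (real (Suc m) ^ 2)" for r
    using mult_left_mono[OF inv_le abs_ge_zero] by (simp add: abs_mult)
  have "\<bar>\<Sum>r<n. a r * (1 / (2 * pi * real (Suc m))^(2*r+2))\<bar>
      \<le> (\<Sum>r<n. \<bar>a r * (1 / (2 * pi * real (Suc m))^(2*r+2))\<bar>)"
    by (rule sum_abs)
  also have "\<dots> \<le> (\<Sum>r<n. \<bar>a r\<bar>) * inverse (real (Suc m) ^ 2)"
    unfolding sum_distrib_right by (rule sum_mono) (rule term_le)
  finally have "\<bar>\<Sum>r<n. a r * (1 / (2 * pi * real (Suc m))^(2*r+2))\<bar>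
      \<le> (\<Sum>r<n. \<bar>a r\<bar>) * inverse (real (Suc m) ^ 2)" .
  then show "norm (c m * (\<Sum>r<n. a r * (1 / (2 * pi * real (Suc m))^(2*r+2))))
      \<le> (\<Sum>r<n. \<bar>a r\<bar>) * inverse (real (Suc m) ^ 2)"
    using assms[of m] by (simp add: abs_mult) (meson abs_ge_zero mult_left_le_one_le order_trans)
qed

theorem lemma3p1:
  fixes n :: nat and x :: real
  assumes "n \<ge> 1" and "0 < x" and "x < 1"
  shows "summable (\<lambda>m. besselY (2*n) (4*pi*real (Suc m)) * cos (2*pi*real (Suc m)*x))
    \<and> summable (\<lambda>m. (2 * (euler_mascheroni + ln (2*pi*real (Suc m))) * besselJ (2*n) (4*pi*real (Suc m))
          + P_fun (2*n) (4*pi*real (Suc m)) - 2 * Q_fun (2*n) (4*pi*real (Suc m))) * cos (2*pi*real (Suc m)*x))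
    \<and> A_fun n x =
        (-1)^n * pi * (\<Sum>m. besselY (2*n) (4*pi*real (Suc m)) * cos (2*pi*real (Suc m)*x))
      + (-1)^(n+1) * (\<Sum>m. (2 * (euler_mascheroni + ln (2*pi*real (Suc m))) * besselJ (2*n) (4*pi*real (Suc m))
          + P_fun (2*n) (4*pi*real (Suc m)) - 2 * Q_fun (2*n) (4*pi*real (Suc m))) * cos (2*pi*real (Suc m)*x))"
proof -
  define Y where "Y m = besselY (2*n) (4*pi*real (Suc m)) * cos (2*pi*real (Suc m)*x)" for m
  define T where "T m = (2 * (euler_mascheroni + ln (2*pi*real (Suc m))) * besselJ (2*n) (4*pi*real (Suc m))
    + P_fun (2*n) (4*pi*real (Suc m)) - 2 * Q_fun (2*n) (4*pi*real (Suc m))) * cos (2*pi*real (Suc m)*x)" for m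
  define S where "S m = cos (2*pi*real (Suc m)*x)
    * (\<Sum>r<n. fact (n + r) / fact (n - r - 1) * (1 / (2*pi*real (Suc m))^(2*r+2)))" for m
  have Y: "summable Y" unfolding Y_def using summable_besselY_cos[of "2*n" x] assms by simp
  have S: "summable S" unfolding S_def by (rule summable_bounded_mult_inverse_powers) simp
  have T: "T m = pi * Y m + S m" for m
  proof -
    have X: "2*pi*real (Suc m) > 0" and z: "4*pi*real (Suc m) = 2 * (2*pi*real (Suc m))" by simp_all
    show ?thesis
      unfolding T_def Y_def S_def z besselJ_P_Q_eq_besselY_even[OF X] by (simp add: algebra_simps)
  qed
  have "summable T" unfolding T by (intro summable_add summable_mult Y S)
  moreover have "(\<Sum>m. T m) = pi * (\<Sum>m. Y m) + (\<Sum>m. S m)"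
    unfolding T by (simp add: suminf_add[OF summable_mult[OF Y] S, symmetric] suminf_mult[OF Y])
  moreover have "A_fun n x = (-1)^(n+1) * (\<Sum>m. S m)" unfolding A_fun_def S_def ..
  ultimately have "A_fun n x = (-1)^n * pi * (\<Sum>m. Y m) + (-1)^(n+1) * (\<Sum>m. T m)"
    by (simp add: algebra_simps)
  with Y \<open>summable T\<close> show ?thesis unfolding Y_def T_def by blast
qed

end
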